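(* Let $\mathcal{X}=\mathcal{X}_1\times\cdots\times\mathcal{X}_d$ and let $M:\mathcal{X}^n\to\mathcal{Y}$ be a randomized algorithm. (1) If $M$ satisfies $\varepsilon_0$-$\nabla_0$DP, then $M$ satisfies $(d\varepsilon_0)$-DP. (2) If $M$ satisfies $\varepsilon_0$-$\nabla_0$CDP, then $M$ satisfies $\frac12 d^2\varepsilon_0^2$-zCDP, which in turn implies that $M$ satisfies $(\tilde\varepsilon,\tilde\delta)$-DP for every $\tilde\varepsilon\ge\frac12 d^2\varepsilon_0^2$ with $\tilde\delta=\exp\!\left(-(\tilde\varepsilon-\frac12 d^2\varepsilon_0^2)^2/(2d^2\varepsilon_0^2)\right)$. (3) More generally, if $M$ satisfies $\varepsilon$-$\nabla$DP for a symmetric non-negative $\varepsilon:\mathcal{X}\times\mathcal{X}\to\mathbb{R}$, then $M$ satisfies $(\sup_{x,x'\in\mathcal{X}}\varepsilon(x,x'))$-DP. (4) Conversely, if $M$ satisfies $\varepsilon$-DP for a constant $\varepsilon\ge0$, then $M$ satisfies $\varepsilon$-$\nabla$DP (with $\varepsilon$ viewed as a constant function) and $\varepsilon$-$\nabla_0$DP.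
   Context: Two datasets $x,x'\in\mathcal{X}^n$ differ on a single entry if there is $i$ with $x_j=x'_j$ for all $j\ne i$. $M$ is $(\varepsilon,\delta)$-DP if for all such $x,x'$ and measurable $S$, $\Pr[M(x)\in S]\le e^{\varepsilon}\Pr[M(x')\in S]+\delta$; $\varepsilon$-DP means $\delta=0$. Rényi divergence: $D_\lambda(P\|Q)=\frac{1}{\lambda-1}\log\mathbb{E}_{X\sim P}[(P(X)/Q(X))^{\lambda-1}]$, $D_*(P\|Q)=\sup_{\lambda>1}\frac1\lambda D_\lambda(P\|Q)$. $M$ is $\frac12\varepsilon^2$-zCDP if $D_*(M(x)\|M(x'))\le\frac12\varepsilon^2$ for all such $x,x'$. For symmetric non-negative $\varepsilon:\mathcal{X}\times\mathcal{X}\to\mathbb{R}$, $M$ is $\varepsilon$-$\nabla$DP if for all $x,x'$ differing only in entry $i$, $\Pr[M(x)\in S]\le e^{\varepsilon(x_i,x'_i)}\Pr[M(x')\in S]$ for all $S$; $\varepsilon$-$\nabla$CDP if $D_*(M(x)\|M(x'))\le\frac12\varepsilon(x_i,x'_i)^2$. With $\|u-v\|_0=|\{j\in[d]:u_j\ne v_j\}|$ for $u,v\in\mathcal{X}$, $\varepsilon_0$-$\nabla_0$DP (resp. $\varepsilon_0$-$\nabla_0$CDP) means $\varepsilon$-$\nabla$DP (resp. $\varepsilon$-$\nabla$CDP) with $\varepsilon(u,v)=\varepsilon_0\|u-v\|_0$. *)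

theory Defs
  imports "HOL-Probability.Probability"
begin

definition data_universe :: "(nat \<Rightarrow> 'a set) \<Rightarrow> nat \<Rightarrow> (nat \<Rightarrow> 'a) set" where
  "data_universe Xs d = PiE {..<d} Xs"

definition datasets :: "(nat \<Rightarrow> 'a set) \<Rightarrow> nat \<Rightarrow> nat \<Rightarrow> (nat \<Rightarrow> nat \<Rightarrow> 'a) set" where
  "datasets Xs d n = PiE {..<n} (\<lambda>_. data_universe Xs d)"

definition differ_at :: "nat \<Rightarrow> (nat \<Rightarrow> 'x) \<Rightarrow> (nat \<Rightarrow> 'x) \<Rightarrow> nat \<Rightarrow> bool" where
  "differ_at n x x' i \<longleftrightarrow> i < n \<and> (\<forall>j<n. j \<noteq> i \<longrightarrow> x j = x' j)"

definition hamming0 :: "nat \<Rightarrow> (nat \<Rightarrow> 'a) \<Rightarrow> (nat \<Rightarrow> 'a) \<Rightarrow> nat" where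
  "hamming0 d u v = card {j \<in> {..<d}. u j \<noteq> v j}"

definition randomized_alg :: "(nat \<Rightarrow> 'x) set \<Rightarrow> 'b measure \<Rightarrow> ((nat \<Rightarrow> 'x) \<Rightarrow> 'b measure) \<Rightarrow> bool" where
  "randomized_alg D Y M \<longleftrightarrow> (\<forall>x\<in>D. prob_space (M x) \<and> sets (M x) = sets Y)"

definition approx_dp :: "(nat \<Rightarrow> 'x) set \<Rightarrow> nat \<Rightarrow> 'b measure \<Rightarrow> ((nat \<Rightarrow> 'x) \<Rightarrow> 'b measure)
    \<Rightarrow> real \<Rightarrow> real \<Rightarrow> bool" where
  "approx_dp D n Y M eps delta \<longleftrightarrow>
     (\<forall>x\<in>D. \<forall>x'\<in>D. \<forall>i. differ_at n x x' i \<longrightarrow>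
        (\<forall>S\<in>sets Y. measure (M x) S \<le> exp eps * measure (M x') S + delta))"

abbreviation pure_dp :: "(nat \<Rightarrow> 'x) set \<Rightarrow> nat \<Rightarrow> 'b measure \<Rightarrow> ((nat \<Rightarrow> 'x) \<Rightarrow> 'b measure)
    \<Rightarrow> real \<Rightarrow> bool" where
  "pure_dp D n Y M eps \<equiv> approx_dp D n Y M eps 0"

text \<open>Renyi divergence of order lam of P from Q (infinite unless P << Q);
  RN_deriv Q P is the density dP/dQ.\<close>
definition renyi_div :: "real \<Rightarrow> 'b measure \<Rightarrow> 'b measure \<Rightarrow> ereal" where
  "renyi_div lam P Q =
     (if absolutely_continuous Q P then
        (let E = (\<integral>\<^sup>+ y. ennreal (enn2real (RN_deriv Q P y) powr (lam - 1)) \<partial>P)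
         in if E = \<infinity> then \<infinity> else ereal (ln (enn2real E) / (lam - 1)))
      else \<infinity>)"

definition renyi_star :: "'b measure \<Rightarrow> 'b measure \<Rightarrow> ereal" where
  "renyi_star P Q = (SUP lam\<in>{1<..}. renyi_div lam P Q / ereal lam)"

text \<open>rho-zCDP (rho = eps^2/2 in the paper's notation).\<close>
definition zcdp :: "(nat \<Rightarrow> 'x) set \<Rightarrow> nat \<Rightarrow> ((nat \<Rightarrow> 'x) \<Rightarrow> 'b measure) \<Rightarrow> real \<Rightarrow> bool" where
  "zcdp D n M rho \<longleftrightarrow>
     (\<forall>x\<in>D. \<forall>x'\<in>D. \<forall>i. differ_at n x x' i \<longrightarrow> renyi_star (M x) (M x') \<le> ereal rho)"

definition nabla_dp :: "(nat \<Rightarrow> 'x) set \<Rightarrow> nat \<Rightarrow> 'b measure \<Rightarrow> ((nat \<Rightarrow> 'x) \<Rightarrow> 'b measure)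
    \<Rightarrow> ('x \<Rightarrow> 'x \<Rightarrow> real) \<Rightarrow> bool" where
  "nabla_dp D n Y M eps \<longleftrightarrow>
     (\<forall>x\<in>D. \<forall>x'\<in>D. \<forall>i. differ_at n x x' i \<longrightarrow>
        (\<forall>S\<in>sets Y. measure (M x) S \<le> exp (eps (x i) (x' i)) * measure (M x') S))"

definition nabla_cdp :: "(nat \<Rightarrow> 'x) set \<Rightarrow> nat \<Rightarrow> ((nat \<Rightarrow> 'x) \<Rightarrow> 'b measure)
    \<Rightarrow> ('x \<Rightarrow> 'x \<Rightarrow> real) \<Rightarrow> bool" where
  "nabla_cdp D n M eps \<longleftrightarrow>
     (\<forall>x\<in>D. \<forall>x'\<in>D. \<forall>i. differ_at n x x' i \<longrightarrow>
        renyi_star (M x) (M x') \<le> ereal ((eps (x i) (x' i))\<^sup>2 / 2))"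

definition nabla0_dp :: "nat \<Rightarrow> (nat \<Rightarrow> (nat \<Rightarrow> 'a)) set \<Rightarrow> nat \<Rightarrow> 'b measure
    \<Rightarrow> ((nat \<Rightarrow> (nat \<Rightarrow> 'a)) \<Rightarrow> 'b measure) \<Rightarrow> real \<Rightarrow> bool" where
  "nabla0_dp d D n Y M eps0 \<longleftrightarrow> nabla_dp D n Y M (\<lambda>u v. eps0 * real (hamming0 d u v))"

definition nabla0_cdp :: "nat \<Rightarrow> (nat \<Rightarrow> (nat \<Rightarrow> 'a)) set \<Rightarrow> nat
    \<Rightarrow> ((nat \<Rightarrow> (nat \<Rightarrow> 'a)) \<Rightarrow> 'b measure) \<Rightarrow> real \<Rightarrow> bool" where
  "nabla0_cdp d D n M eps0 \<longleftrightarrow> nabla_cdp D n M (\<lambda>u v. eps0 * real (hamming0 d u v))"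

end

theory Submission imports Defs begin

(* A changed record differs in between 1 and d coordinates, so eps0 * hamming0 lies between
   eps0 and d * eps0 on neighbouring records; parts (1), (3) and (4) are comparisons of privacy
   parameters on such pairs.  For (2), the Renyi bound gives
   E_P[(dP/dQ)^(lam - 1)] <= exp((lam - 1) lam rho), and Markov's inequality bounds the
   P-probability that dP/dQ exceeds exp eps; that probability is the delta. *)

lemma differ_at_datasets_mem:
  assumes "x \<in> datasets Xs d n" "x' \<in> datasets Xs d n" "differ_at n x x' i"
  shows "x i \<in> data_universe Xs d" "x' i \<in> data_universe Xs d"
  using assms by (auto simp: datasets_def differ_at_def)

lemma differ_at_datasets_eq:
  assumes "x \<in> datasets Xs d n" "x' \<in> datasets Xs d n" "differ_at n x x' i" "x i = x' i"
  shows "x = x'"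
proof -
  have "x \<in> PiE {..<n} (\<lambda>_. data_universe Xs d)" "x' \<in> PiE {..<n} (\<lambda>_. data_universe Xs d)"
    using assms(1,2) by (simp_all add: datasets_def)
  thus ?thesis
  proof (rule PiE_ext)
    fix j assume "j \<in> {..<n}"
    thus "x j = x' j" using assms(3,4) unfolding differ_at_def by (cases "j = i") simp_all
  qed
qed

lemma hamming0_le: "hamming0 d u v \<le> d"
proof -
  have "card {j \<in> {..<d}. u j \<noteq> v j} \<le> card {..<d}" by (intro card_mono) auto
  thus ?thesis by (simp add: hamming0_def)
qed

lemma hamming0_scaled_le: "0 \<le> eps0 \<Longrightarrow> eps0 * real (hamming0 d u v) \<le> real d * eps0"
  using hamming0_le[of d u v] by (simp add: mult.commute mult_left_mono)

lemma hamming0_pos: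
  assumes "u \<in> data_universe Xs d" "v \<in> data_universe Xs d" "u \<noteq> v"
  shows "1 \<le> hamming0 d u v"
proof -
  obtain j where "j < d" "u j \<noteq> v j"
    using assms unfolding data_universe_def by (metis PiE_ext lessThan_iff)
  hence "{j \<in> {..<d}. u j \<noteq> v j} \<noteq> {}" by auto
  thus ?thesis by (simp add: hamming0_def Suc_le_eq card_gt_0_iff)
qed

lemma pure_dp_iff_nabla_dp_const: "pure_dp D n Y M e \<longleftrightarrow> nabla_dp D n Y M (\<lambda>_ _. e)"
  by (simp add: approx_dp_def nabla_dp_def)

lemma nabla_dp_mono:
  assumes H: "nabla_dp (datasets Xs d n) n Y M eps"
    and le: "\<And>u v. u \<in> data_universe Xs d \<Longrightarrow> v \<in> data_universe Xs d \<Longrightarrow> u \<noteq> v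
               \<Longrightarrow> eps u v \<le> eps' u v"
    and diag: "\<And>u. u \<in> data_universe Xs d \<Longrightarrow> 0 \<le> eps' u u"
  shows "nabla_dp (datasets Xs d n) n Y M eps'"
  unfolding nabla_dp_def
proof (intro ballI allI impI)
  fix x x' i S
  assume x: "x \<in> datasets Xs d n" and x': "x' \<in> datasets Xs d n"
    and di: "differ_at n x x' i" and S: "S \<in> sets Y"
  note mem = differ_at_datasets_mem[OF x x' di]
  show "measure (M x) S \<le> exp (eps' (x i) (x' i)) * measure (M x') S"
  proof (cases "x i = x' i")
    case True
    hence "x = x'" by (rule differ_at_datasets_eq[OF x x' di])
    moreover have "1 \<le> exp (eps' (x i) (x' i))" using diag mem True by simp
    ultimately show ?thesis by (simp add: mult_le_cancel_right1)
  next
    case False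
    have "measure (M x) S \<le> exp (eps (x i) (x' i)) * measure (M x') S"
      using H x x' di S unfolding nabla_dp_def by blast
    also have "\<dots> \<le> exp (eps' (x i) (x' i)) * measure (M x') S"
      using le[OF mem False] by (intro mult_right_mono) auto
    finally show ?thesis .
  qed
qed

lemma nabla0_dp_imp_pure_dp:
  assumes "0 \<le> eps0" and "nabla0_dp d (datasets Xs d n) n Y M eps0"
  shows "pure_dp (datasets Xs d n) n Y M (real d * eps0)"
  using assms unfolding pure_dp_iff_nabla_dp_const nabla0_dp_def
  by (elim nabla_dp_mono) (simp_all add: hamming0_scaled_le)

lemma nabla_dp_imp_pure_dp_SUP:
  fixes eps :: "(nat \<Rightarrow> 'a) \<Rightarrow> (nat \<Rightarrow> 'a) \<Rightarrow> real"
  assumes H: "nabla_dp (datasets Xs d n) n Y M eps"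
    and bdd: "bdd_above ((\<lambda>(u, v). eps u v) ` (data_universe Xs d \<times> data_universe Xs d))"
    and diag: "\<And>u. u \<in> data_universe Xs d \<Longrightarrow> 0 \<le> eps u u"
  shows "pure_dp (datasets Xs d n) n Y M (SUP (u, v)\<in>data_universe Xs d \<times> data_universe Xs d. eps u v)"
proof -
  let ?sup = "SUP (u, v)\<in>data_universe Xs d \<times> data_universe Xs d. eps u v"
  have le_sup: "eps u v \<le> ?sup" if "u \<in> data_universe Xs d" "v \<in> data_universe Xs d" for u v
    using cSUP_upper[of "(u, v)" _ "\<lambda>(u, v). eps u v", OF _ bdd] that by simp
  have "0 \<le> ?sup" if "u \<in> data_universe Xs d" for u
    using le_sup[OF that that] diag[OF that] by linarith
  with le_sup show ?thesis
    unfolding pure_dp_iff_nabla_dp_const using H by (elim nabla_dp_mono) auto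
qed

lemma pure_dp_imp_nabla0_dp:
  assumes "0 \<le> e" and "pure_dp (datasets Xs d n) n Y M e"
  shows "nabla0_dp d (datasets Xs d n) n Y M e"
proof -
  have "e \<le> e * real (hamming0 d u v)"
    if "u \<in> data_universe Xs d" "v \<in> data_universe Xs d" "u \<noteq> v" for u v
    using hamming0_pos[OF that] \<open>0 \<le> e\<close> by (simp add: mult_le_cancel_left1)
  thus ?thesis
    using assms unfolding nabla0_dp_def pure_dp_iff_nabla_dp_const by (elim nabla_dp_mono) auto
qed

lemma nabla_cdp_imp_zcdp:
  assumes "nabla_cdp D n M eps" and "\<And>u v. (eps u v)\<^sup>2 / 2 \<le> rho"
  shows "zcdp D n M rho"
  using assms unfolding nabla_cdp_def zcdp_def by (meson ereal_less_eq(3) order.trans)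

lemma nabla0_cdp_imp_zcdp:
  assumes "0 \<le> eps0" and "nabla0_cdp d D n M eps0"
  shows "zcdp D n M ((real d)\<^sup>2 * eps0\<^sup>2 / 2)"
proof -
  have "(eps0 * real (hamming0 d u v))\<^sup>2 / 2 \<le> (real d)\<^sup>2 * eps0\<^sup>2 / 2" for u v
    using hamming0_scaled_le[OF \<open>0 \<le> eps0\<close>, of d u v] \<open>0 \<le> eps0\<close>
    by (simp add: power_mono flip: power_mult_distrib)
  with assms(2) show ?thesis unfolding nabla0_cdp_def by (rule nabla_cdp_imp_zcdp)
qed

lemma renyi_div_le_of_renyi_star_le:
  assumes "renyi_star P Q \<le> ereal rho" and "1 < lam"
  shows "renyi_div lam P Q \<le> ereal (lam * rho)"
proof -
  have "renyi_div lam P Q / ereal lam \<le> ereal rho"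
    using assms unfolding renyi_star_def by (meson SUP_le_iff greaterThan_iff)
  thus ?thesis
    using assms(2) by (cases "renyi_div lam P Q") (auto simp: field_simps split: if_splits)
qed

lemma renyi_moment_le_of_renyi_div_le:
  assumes "renyi_div lam P Q \<le> ereal r" and "1 < lam"
  shows "absolutely_continuous Q P"
    and "(\<integral>\<^sup>+ y. ennreal (enn2real (RN_deriv Q P y) powr (lam - 1)) \<partial>P)
           \<le> ennreal (exp ((lam - 1) * r))" (is "?E \<le> _")
proof -
  have ac: "absolutely_continuous Q P" and fin: "?E \<noteq> \<infinity>"
    and ln_le: "ln (enn2real ?E) / (lam - 1) \<le> r"
    using assms(1) unfolding renyi_div_def Let_def by (auto split: if_splits)
  show "absolutely_continuous Q P" by (fact ac)
  have "enn2real ?E \<le> exp ((lam - 1) * r)"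
  proof (cases "enn2real ?E > 0")
    case True
    have "ln (enn2real ?E) \<le> (lam - 1) * r" using ln_le assms(2) by (simp add: field_simps)
    hence "exp (ln (enn2real ?E)) \<le> exp ((lam - 1) * r)" by simp
    thus ?thesis using True by simp
  qed (use exp_gt_zero[of "(lam - 1) * r"] in linarith)
  thus "?E \<le> ennreal (exp ((lam - 1) * r))"
    using fin enn2real_le_iff[of ?E "exp ((lam - 1) * r)"] by (simp add: top.not_eq_extremum)
qed

lemma Markov_inequality_powr:
  assumes [measurable]: "f \<in> borel_measurable M" and "0 < t" "0 < p"
  shows "ennreal (t powr p) * emeasure M {y \<in> space M. t < f y}
           \<le> (\<integral>\<^sup>+ y. ennreal (f y powr p) \<partial>M)"
proof -
  have "ennreal (t powr p) * emeasure M {y \<in> space M. t < f y}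
          = (\<integral>\<^sup>+ y. ennreal (t powr p) * indicator {y \<in> space M. t < f y} y \<partial>M)"
    by (simp add: nn_integral_cmult_indicator)
  also have "\<dots> \<le> (\<integral>\<^sup>+ y. ennreal (f y powr p) \<partial>M)"
  proof (intro nn_integral_mono)
    fix y
    show "ennreal (t powr p) * indicator {y \<in> space M. t < f y} y \<le> ennreal (f y powr p)"
      using assms(2,3) by (auto simp: indicator_def intro!: ennreal_leI powr_mono2)
  qed
  finally show ?thesis .
qed

lemma measure_le_mult_plus_density_tail:
  assumes P: "finite_measure P" and Q: "finite_measure Q" and sets: "sets P = sets Q"
    and ac: "absolutely_continuous Q P" and "0 \<le> t" and S: "S \<in> sets P"
  shows "measure P S \<le> t * measure Q S
           + measure P {y \<in> space P. t < enn2real (RN_deriv Q P y)}"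
    (is "_ \<le> _ + measure P ?B")
proof -
  interpret P: finite_measure P by fact
  interpret Q: finite_measure Q by fact
  have [measurable]: "RN_deriv Q P \<in> borel_measurable P"
    using borel_measurable_RN_deriv measurable_cong_sets[OF sets refl] by blast
  have B: "?B \<in> sets P" by measurable
  have fin: "AE y in Q. RN_deriv Q P y \<noteq> \<infinity>"
    using Q.RN_deriv_finite[OF _ ac sets] P.sigma_finite_measure by blast
  have "emeasure P (S - ?B) = (\<integral>\<^sup>+ y. RN_deriv Q P y * indicator (S - ?B) y \<partial>Q)"
    using S B sets by (subst Q.density_RN_deriv[OF ac sets, symmetric]) (simp add: emeasure_density)
  also have "\<dots> \<le> (\<integral>\<^sup>+ y. ennreal t * indicator S y \<partial>Q)"
  proof (rule nn_integral_mono_AE)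
    show "AE y in Q. RN_deriv Q P y * indicator (S - ?B) y \<le> ennreal t * indicator S y"
      using fin
    proof eventually_elim
      case (elim y)
      have "RN_deriv Q P y \<le> ennreal t" if "y \<in> S - ?B"
      proof -
        have "y \<in> space P" using that S sets.sets_into_space by blast
        hence "ennreal (enn2real (RN_deriv Q P y)) \<le> ennreal t" using that by (auto intro: ennreal_leI)
        thus ?thesis using elim by (simp add: ennreal_enn2real_if)
      qed
      thus ?case by (auto simp: indicator_def)
    qed
  qed
  also have "\<dots> = ennreal t * emeasure Q S" using S sets by (simp add: nn_integral_cmult_indicator)
  finally have "measure P (S - ?B) \<le> t * measure Q S"
    using \<open>0 \<le> t\<close> by (simp add: P.emeasure_eq_measure Q.emeasure_eq_measure ennreal_mult''[symmetric])
  moreover have "measure P S \<le> measure P ((S - ?B) \<union> ?B)"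
    using S B by (intro P.finite_measure_mono) auto
  moreover have "measure P ((S - ?B) \<union> ?B) \<le> measure P (S - ?B) + measure P ?B"
    using S B by (intro measure_Un_le) auto
  ultimately show ?thesis by linarith
qed

lemma renyi_star_le_imp_measure_le:
  assumes P: "prob_space P" and Q: "prob_space Q" and sets: "sets P = sets Q"
    and R: "renyi_star P Q \<le> ereal rho" and "0 < rho" "rho < eps" and S: "S \<in> sets P"
  shows "measure P S \<le> exp eps * measure Q S + exp (- ((eps - rho)\<^sup>2 / (4 * rho)))"
proof -
  interpret P: prob_space P by fact
  interpret Q: prob_space Q by fact
  \<comment> \<open>this lam minimises the exponent (lam - 1) (lam rho - eps) of the final bound\<close>
  define lam where "lam = (eps + rho) / (2 * rho)"
  define f where "f y = enn2real (RN_deriv Q P y)" for y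
  define B where "B = {y \<in> space P. exp eps < f y}"
  have lam: "1 < lam" using assms(5,6) by (simp add: lam_def field_simps)
  note rd = renyi_div_le_of_renyi_star_le[OF R lam]
  note ac = renyi_moment_le_of_renyi_div_le(1)[OF rd lam]
  have [measurable]: "RN_deriv Q P \<in> borel_measurable P"
    using borel_measurable_RN_deriv measurable_cong_sets[OF sets refl] by blast
  have f [measurable]: "f \<in> borel_measurable P" unfolding f_def by measurable
  have "ennreal (exp ((lam - 1) * eps) * measure P B) = ennreal (exp eps powr (lam - 1)) * emeasure P B"
    by (simp add: P.emeasure_eq_measure ennreal_mult powr_def)
  also have "\<dots> \<le> (\<integral>\<^sup>+ y. ennreal (f y powr (lam - 1)) \<partial>P)"
    unfolding B_def using lam by (intro Markov_inequality_powr f) auto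
  also have "\<dots> \<le> ennreal (exp ((lam - 1) * (lam * rho)))"
    unfolding f_def by (rule renyi_moment_le_of_renyi_div_le(2)[OF rd lam])
  finally have "exp ((lam - 1) * eps) * measure P B \<le> exp ((lam - 1) * (lam * rho))"
    by simp
  hence "measure P B \<le> exp ((lam - 1) * (lam * rho) - (lam - 1) * eps)"
    unfolding exp_diff by (subst pos_le_divide_eq) (auto simp: mult.commute)
  also have "(lam - 1) * (lam * rho) - (lam - 1) * eps = - ((eps - rho)\<^sup>2 / (4 * rho))"
    using assms(5) unfolding lam_def by (simp add: field_simps power2_eq_square)
  finally have "measure P B \<le> exp (- ((eps - rho)\<^sup>2 / (4 * rho)))" .
  moreover have "measure P S \<le> exp eps * measure Q S + measure P B"
    unfolding B_def f_def
    by (intro measure_le_mult_plus_density_tail S ac sets P.finite_measure_axioms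
        Q.finite_measure_axioms) simp
  ultimately show ?thesis by linarith
qed

text \<open>For rho = 0 or eps = rho the bound is the trivial delta = 1 (recall x / 0 = 0).\<close>

lemma zcdp_imp_approx_dp:
  assumes alg: "randomized_alg D Y M" and Z: "zcdp D n M rho" and "0 \<le> rho" "rho \<le> eps"
  shows "approx_dp D n Y M eps (exp (- ((eps - rho)\<^sup>2 / (4 * rho))))"
  unfolding approx_dp_def
proof (intro ballI allI impI)
  fix x x' i S assume x: "x \<in> D" and x': "x' \<in> D" and di: "differ_at n x x' i" and S: "S \<in> sets Y"
  have Mx: "prob_space (M x)" "sets (M x) = sets Y" and Mx': "prob_space (M x')" "sets (M x') = sets Y"
    using alg x x' by (auto simp: randomized_alg_def)
  show "measure (M x) S \<le> exp eps * measure (M x') S + exp (- ((eps - rho)\<^sup>2 / (4 * rho)))"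
  proof (cases "0 < rho \<and> rho < eps")
    case True
    thus ?thesis
      using Z x x' di S Mx Mx' unfolding zcdp_def
      by (intro renyi_star_le_imp_measure_le) auto
  next
    case False
    hence one: "exp (- ((eps - rho)\<^sup>2 / (4 * rho))) = 1" using assms(3,4) by auto
    show ?thesis
      unfolding one using prob_space.prob_le_1[OF Mx(1)] by (simp add: add_increasing)
  qed
qed

theorem proposition2p8:
  fixes Xs :: "nat \<Rightarrow> 'a set" and d n :: nat and Y :: "'b measure"
    and M :: "(nat \<Rightarrow> nat \<Rightarrow> 'a) \<Rightarrow> 'b measure"
  assumes alg: "randomized_alg (datasets Xs d n) Y M"
  shows
    "(\<forall>eps0 \<ge> 0. nabla0_dp d (datasets Xs d n) n Y M eps0
        \<longrightarrow> pure_dp (datasets Xs d n) n Y M (real d * eps0))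
   \<and> (\<forall>eps0 \<ge> 0. nabla0_cdp d (datasets Xs d n) n M eps0
        \<longrightarrow> zcdp (datasets Xs d n) n M ((real d)\<^sup>2 * eps0\<^sup>2 / 2)
          \<and> (\<forall>eps' \<ge> (real d)\<^sup>2 * eps0\<^sup>2 / 2.
               approx_dp (datasets Xs d n) n Y M eps'
                 (exp (- ((eps' - (real d)\<^sup>2 * eps0\<^sup>2 / 2)\<^sup>2 / (2 * (real d)\<^sup>2 * eps0\<^sup>2))))))
   \<and> (\<forall>eps :: (nat \<Rightarrow> 'a) \<Rightarrow> (nat \<Rightarrow> 'a) \<Rightarrow> real.
        (\<forall>u\<in>data_universe Xs d. \<forall>v\<in>data_universe Xs d. eps u v = eps v u \<and> 0 \<le> eps u v)
        \<longrightarrow> bdd_above ((\<lambda>(u, v). eps u v) ` (data_universe Xs d \<times> data_universe Xs d))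
        \<longrightarrow> nabla_dp (datasets Xs d n) n Y M eps
        \<longrightarrow> pure_dp (datasets Xs d n) n Y M
              (SUP (u, v)\<in>data_universe Xs d \<times> data_universe Xs d. eps u v))
   \<and> (\<forall>e \<ge> 0. pure_dp (datasets Xs d n) n Y M e
        \<longrightarrow> nabla_dp (datasets Xs d n) n Y M (\<lambda>_ _. e)
          \<and> nabla0_dp d (datasets Xs d n) n Y M e)"
proof (intro conjI allI impI)
  fix eps0 :: real assume "0 \<le> eps0" "nabla0_dp d (datasets Xs d n) n Y M eps0"
  thus "pure_dp (datasets Xs d n) n Y M (real d * eps0)" by (rule nabla0_dp_imp_pure_dp)
next
  fix eps0 eps' :: real assume "0 \<le> eps0" "nabla0_cdp d (datasets Xs d n) n M eps0"
  thus Z: "zcdp (datasets Xs d n) n M ((real d)\<^sup>2 * eps0\<^sup>2 / 2)" by (rule nabla0_cdp_imp_zcdp)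
  assume "(real d)\<^sup>2 * eps0\<^sup>2 / 2 \<le> eps'"
  from zcdp_imp_approx_dp[OF alg Z _ this]
  show "approx_dp (datasets Xs d n) n Y M eps'
          (exp (- ((eps' - (real d)\<^sup>2 * eps0\<^sup>2 / 2)\<^sup>2 / (2 * (real d)\<^sup>2 * eps0\<^sup>2))))"
    by (simp add: mult_ac)
next
  fix eps :: "(nat \<Rightarrow> 'a) \<Rightarrow> (nat \<Rightarrow> 'a) \<Rightarrow> real"
  assume "\<forall>u\<in>data_universe Xs d. \<forall>v\<in>data_universe Xs d. eps u v = eps v u \<and> 0 \<le> eps u v"
    and "bdd_above ((\<lambda>(u, v). eps u v) ` (data_universe Xs d \<times> data_universe Xs d))"
    and "nabla_dp (datasets Xs d n) n Y M eps"
  thus "pure_dp (datasets Xs d n) n Y M (SUP (u, v)\<in>data_universe Xs d \<times> data_universe Xs d. eps u v)"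
    by (intro nabla_dp_imp_pure_dp_SUP) auto
next
  fix e :: real assume "0 \<le> e" "pure_dp (datasets Xs d n) n Y M e"
  thus "nabla_dp (datasets Xs d n) n Y M (\<lambda>_ _. e)" "nabla0_dp d (datasets Xs d n) n Y M e"
    by (simp_all add: pure_dp_iff_nabla_dp_const pure_dp_imp_nabla0_dp)
qed

end
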